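(* Let $n\in\mathbb{N}$, $y_1,\dots,y_n\in\{-1,+1\}$, let $K\in\mathbb{R}^{n\times n}$ be a symmetric strictly positive definite matrix with columns $K_1,\dots,K_n$, and let $\ell:\mathbb{R}\to\mathbb{R}$ be convex and twice continuously differentiable. For $c\in\mathbb{R}^n_{\ge0}$ let $(\alpha^\star,b^\star)$ be a solution of $$\min_{\alpha\in\mathbb{R}^n,\,b\in\mathbb{R}}\ \tfrac12\alpha^\top K\alpha+\sum_{i=1}^nc_i\,\ell\big(y_i[K_i^\top\alpha+b]\big),$$ and define $u_i=y_i\,\ell'(y_i[K_i^\top\alpha^\star+b^\star])$ and $v_i=c_i\,\ell''(y_i[K_i^\top\alpha^\star+b^\star])$, $i=1,\dots,n$. If $v\neq0$, then the solution is unique, $\alpha^\star$ and $b^\star$ are continuously differentiable functions of $c$, and $$\begin{bmatrix}\partial\alpha^\star/\partial c\\ \partial b^\star/\partial c\end{bmatrix}=-\begin{bmatrix}I+\operatorname{diag}(v)K & v\\ \mathbf 1^\top & 0\end{bmatrix}^{-1}\begin{bmatrix}\operatorname{diag}(u)\\ 0^\top\end{bmatrix}.$$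
   Context: $\mathbf 1$ is the all-ones vector in $\mathbb{R}^n$, $I$ the $n\times n$ identity, $\partial\alpha^\star/\partial c$ the $n\times n$ Jacobian and $\partial b^\star/\partial c$ the $1\times n$ row of partial derivatives. *)

theory Defs
  imports "HOL-Analysis.Analysis"
begin

definition svm_obj :: "(real \<Rightarrow> real) \<Rightarrow> real^'n^'n \<Rightarrow> real^'n \<Rightarrow> real^'n
    \<Rightarrow> real^'n \<Rightarrow> real \<Rightarrow> real" where
  "svm_obj l K y c a b =
     1/2 * (a \<bullet> (K *v a)) + (\<Sum>i\<in>UNIV. c$i * l (y$i * ((transpose K *v a)$i + b)))"

definition is_solution :: "(real \<Rightarrow> real) \<Rightarrow> real^'n^'n \<Rightarrow> real^'n \<Rightarrow> real^'n
    \<Rightarrow> real^'n \<Rightarrow> real \<Rightarrow> bool" where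
  "is_solution l K y c a b \<longleftrightarrow> (\<forall>a' b'. svm_obj l K y c a b \<le> svm_obj l K y c a' b')"

definition margin :: "real^'n^'n \<Rightarrow> real^'n \<Rightarrow> real^'n \<Rightarrow> real \<Rightarrow> real^'n" where
  "margin K y a b = (\<chi> i. y$i * ((transpose K *v a)$i + b))"

text \<open>Block matrix [[I + diag(v) K, v], [1^T, 0]], index None = the extra (b) row/column.\<close>
definition kkt_matrix :: "real^'n^'n \<Rightarrow> real^'n \<Rightarrow> real^('n option)^('n option)" where
  "kkt_matrix K v = (\<chi> p q. case (p, q) of
       (Some i, Some j) \<Rightarrow> (if i = j then 1 else 0) + v$i * K$i$j
     | (Some i, None) \<Rightarrow> v$i
     | (None, Some j) \<Rightarrow> 1
     | (None, None) \<Rightarrow> 0)"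

definition rhs_matrix :: "real^'n \<Rightarrow> real^'n^('n option)" where
  "rhs_matrix u = (\<chi> p j. case p of Some i \<Rightarrow> (if i = j then u$i else 0) | None \<Rightarrow> 0)"

definition stacked_jacobian :: "(real^'n \<Rightarrow> real^'n) \<Rightarrow> (real^'n \<Rightarrow> real) \<Rightarrow> real^'n^('n option)" where
  "stacked_jacobian DA DB = (\<chi> p j. case p of Some i \<Rightarrow> DA (axis j 1) $ i | None \<Rightarrow> DB (axis j 1))"

end

theory Submission
  imports Defs
begin

text \<open>
  The objective is convex, so its solutions are exactly its stationary points, i.e. the
  pairs (\<alpha>, b) with \<alpha>_i + c_i u_i = 0 for all i and \<Sum>_i c_i u_i = 0. Positive definiteness
  of K pins down \<alpha>, and a coordinate with v_i \<noteq> 0 makes the loss strictly convex in the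
  direction of b, which pins down b. Given the first equations, the last one is equivalent
  to \<Sum>_i \<alpha>_i = 0; written this way, the stationarity conditions become the zero set of a
  residual map whose Jacobian in (\<alpha>, b) is exactly [[I + diag(v) K, v], [1^T, 0]]. This
  matrix is invertible since v \<ge> 0, v \<noteq> 0 and K is positive definite, so the implicit
  function theorem yields a C^1 branch of stationary points, which remain the unique
  solutions as long as v stays nonzero. Differentiating the residual along the branch
  gives the formula.
\<close>

section \<open>Convex functions of one variable\<close>

lemma convex_deriv_above_tangent:
  fixes l l1 :: "real \<Rightarrow> real"
  assumes "convex_on UNIV l" and "\<And>x. (l has_real_derivative l1 x) (at x)"
  shows "l x - l t \<ge> l1 t * (x - t)"
  by (rule convex_on_imp_above_tangent[OF assms(1)]) (use assms(2) in auto)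

lemma convex_deriv_mono:
  fixes l l1 :: "real \<Rightarrow> real"
  assumes cvx: "convex_on UNIV l" and d1: "\<And>x. (l has_real_derivative l1 x) (at x)"
    and "s \<le> t"
  shows "l1 s \<le> l1 t"
proof -
  have "l t - l s \<ge> l1 s * (t - s)" and "l s - l t \<ge> l1 t * (s - t)"
    by (rule convex_deriv_above_tangent[OF cvx d1])+
  then have "(l1 t - l1 s) * (t - s) \<ge> 0" by (simp add: algebra_simps)
  with \<open>s \<le> t\<close> show ?thesis
    by (cases "s = t") (auto simp: zero_le_mult_iff)
qed

lemma convex_second_deriv_nonneg:
  fixes l l1 l2 :: "real \<Rightarrow> real"
  assumes cvx: "convex_on UNIV l" and d1: "\<And>x. (l has_real_derivative l1 x) (at x)"
    and d2: "\<And>x. (l1 has_real_derivative l2 x) (at x)"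
  shows "l2 t \<ge> 0"
proof (rule ccontr)
  assume "\<not> l2 t \<ge> 0"
  then obtain d where "d > 0" and "\<forall>h>0. h < d \<longrightarrow> l1 (t + h) < l1 t"
    using DERIV_neg_dec_right[OF d2] by (meson not_le)
  then have "l1 (t + d/2) < l1 t" by auto
  moreover have "l1 t \<le> l1 (t + d/2)"
    using \<open>d > 0\<close> by (intro convex_deriv_mono[OF cvx d1]) auto
  ultimately show False by simp
qed

text \<open>
  If the tangent gap vanished at t + d, the mean value theorem would give a point z strictly
  between t and t + d with l1 z = l1 t; as l1 is monotone, it would be constant between t
  and z, contradicting l2 t > 0.
\<close>
lemma convex_strictly_above_tangent:
  fixes l l1 l2 :: "real \<Rightarrow> real"
  assumes cvx: "convex_on UNIV l" and d1: "\<And>x. (l has_real_derivative l1 x) (at x)"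
    and d2: "\<And>x. (l1 has_real_derivative l2 x) (at x)"
    and "l2 t \<noteq> 0" and "d \<noteq> 0"
  shows "l (t + d) - l t - l1 t * d > 0"
proof (rule ccontr)
  assume "\<not> ?thesis"
  moreover have "l (t + d) - l t \<ge> l1 t * d"
    using convex_deriv_above_tangent[OF cvx d1, where x="t + d" and t=t] by simp
  ultimately have gap: "l (t + d) - l t = l1 t * d" by simp
  have pos: "l2 t > 0"
    using convex_second_deriv_nonneg[OF cvx d1 d2, of t] \<open>l2 t \<noteq> 0\<close> by simp
  show False
  proof (cases "d > 0")
    case True
    then obtain z where z: "t < z" "z < t + d" "l (t + d) - l t = (t + d - t) * l1 z"
      using MVT2[of t "t + d" l l1] d1 by auto
    with gap True have "l1 z = l1 t" by simp
    obtain e where "e > 0" "\<forall>h>0. h < e \<longrightarrow> l1 t < l1 (t + h)"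
      using DERIV_pos_inc_right[OF d2 pos] by blast
    then have "l1 t < l1 (t + min (e/2) (z - t))" using z by auto
    moreover have "l1 (t + min (e/2) (z - t)) \<le> l1 z"
      by (intro convex_deriv_mono[OF cvx d1]) auto
    ultimately show False using \<open>l1 z = l1 t\<close> by simp
  next
    case False
    with \<open>d \<noteq> 0\<close> have "d < 0" by simp
    then obtain z where z: "t + d < z" "z < t" "l t - l (t + d) = (t - (t + d)) * l1 z"
      using MVT2[of "t + d" t l l1] d1 by auto
    with gap \<open>d < 0\<close> have "l1 z = l1 t" by (simp add: algebra_simps)
    obtain e where "e > 0" "\<forall>h>0. h < e \<longrightarrow> l1 (t - h) < l1 t"
      using DERIV_pos_inc_left[OF d2 pos] by blast
    then have "l1 (t - min (e/2) (t - z)) < l1 t" using z by auto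
    moreover have "l1 z \<le> l1 (t - min (e/2) (t - z))"
      by (intro convex_deriv_mono[OF cvx d1]) auto
    ultimately show False using \<open>l1 z = l1 t\<close> by simp
  qed
qed

section \<open>Matrices and the implicit function theorem\<close>

lemma sum_UNIV_option:
  "(\<Sum>p\<in>(UNIV :: 'a::finite option set). f p) = f None + (\<Sum>i\<in>UNIV. f (Some i))"
  by (simp add: UNIV_option_conv sum.reindex)

lemma matrix_vector_mult_axis: "((A :: real^'m^'n) *v axis j 1) $ i = A $ i $ j"
  by (metis cart_eq_inner_axis matrix_vector_mul_component)

lemma matrix_vector_mult_uminus_left: "(- (A :: real^'m^'n)) *v x = - (A *v x)"
  by (simp add: matrix_vector_mult_def vec_eq_iff sum_negf)

lemma matrix_vector_mult_uminus_right: "(A :: real^'m^'n) *v (- x) = - (A *v x)"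
  by (simp add: matrix_vector_mult_def vec_eq_iff sum_negf)

lemma has_derivative_vec_lambda:
  fixes f :: "'i::finite \<Rightarrow> 'a::real_normed_vector \<Rightarrow> real"
  assumes "\<And>i. (f i has_derivative f' i) (at x within S)"
  shows "((\<lambda>x. \<chi> i. f i x) has_derivative (\<lambda>h. \<chi> i. f' i h)) (at x within S)"
proof (rule has_derivative_componentwise_within[THEN iffD2], intro ballI)
  fix b :: "real^'i" assume "b \<in> Basis"
  then obtain i where b: "b = axis i 1" using axis_inverse by blast
  show "((\<lambda>x. (\<chi> i. f i x) \<bullet> b) has_derivative (\<lambda>h. (\<chi> i. f' i h) \<bullet> b)) (at x within S)"
    using assms[of i] unfolding b cart_eq_inner_axis[symmetric] by simp
qed

lemma has_derivative_vec_nth: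
  "(f has_derivative f') F \<Longrightarrow> ((\<lambda>x. f x $ i) has_derivative (\<lambda>h. f' h $ i)) F"
  by (rule bounded_linear.has_derivative[OF bounded_linear_vec_nth])

lemma continuous_on_vec_components:
  fixes f :: "'a::topological_space \<Rightarrow> ('b::topological_space)^'i"
  assumes "\<And>p. continuous_on S (\<lambda>x. f x $ p)"
  shows "continuous_on S f"
  using continuous_on_vec_lambda[of S "\<lambda>p x. f x $ p", OF assms] by simp

lemma continuous_on_matrix_mult:
  fixes A :: "'a::topological_space \<Rightarrow> real^'m^'n" and B :: "'a \<Rightarrow> real^'k^'m"
  assumes "continuous_on S A" "continuous_on S B"
  shows "continuous_on S (\<lambda>x. A x ** B x)"
  unfolding matrix_matrix_mult_def
  by (intro continuous_on_vec_lambda continuous_on_sum continuous_on_mult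
       continuous_on_component assms)

lemma continuous_on_det:
  fixes A :: "'a::topological_space \<Rightarrow> real^'n^'n"
  assumes "continuous_on S A"
  shows "continuous_on S (\<lambda>x. det (A x))"
  unfolding det_def
  by (intro continuous_on_sum continuous_on_mult continuous_on_const continuous_on_prod
      continuous_on_component assms)

lemma
  fixes A :: "real^'n^'n"
  assumes "invertible A"
  shows matrix_inv_right: "A ** matrix_inv A = mat 1"
    and matrix_inv_left: "matrix_inv A ** A = mat 1"
proof -
  have "\<exists>A'. A ** A' = mat 1 \<and> A' ** A = mat 1"
    using assms unfolding invertible_def by blast
  from someI_ex[OF this] show "A ** matrix_inv A = mat 1" "matrix_inv A ** A = mat 1"
    unfolding matrix_inv_def by auto
qed

lemma invertible_if_trivial_kernel:
  fixes A :: "real^'n^'n"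
  assumes "\<And>x. A *v x = 0 \<Longrightarrow> x = 0"
  shows "invertible A"
  using assms matrix_left_invertible_ker invertible_left_inverse by blast

lemma matrix_inv_cramer:
  fixes A :: "real^'n^'n"
  assumes "invertible A"
  shows "matrix_inv A $ k $ j = det (\<chi> i j'. if j' = k then axis j 1 $ i else A $ i $ j') / det A"
proof -
  have "A *v (matrix_inv A *v axis j 1) = axis j 1"
    by (simp add: matrix_vector_mul_assoc matrix_inv_right[OF assms])
  then have "matrix_inv A *v axis j 1
      = (\<chi> k. det (\<chi> i j'. if j' = k then axis j 1 $ i else A $ i $ j') / det A)"
    using cramer[OF invertible_det_nz[THEN iffD1, OF assms]] by blast
  then show ?thesis
    by (simp only: matrix_vector_mult_axis[symmetric] vec_lambda_beta)
qed

lemma continuous_on_matrix_inv: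
  fixes A :: "'a::topological_space \<Rightarrow> real^'n^'n"
  assumes cont: "continuous_on S A" and inv: "\<And>x. x \<in> S \<Longrightarrow> invertible (A x)"
  shows "continuous_on S (\<lambda>x. matrix_inv (A x))"
proof (intro continuous_on_vec_components)
  fix k j
  have "continuous_on S (\<lambda>x. \<chi> i j'. if j' = k then axis j 1 $ i else A x $ i $ j')"
  proof (intro continuous_on_vec_lambda)
    fix i j'
    show "continuous_on S (\<lambda>x. if j' = k then axis j 1 $ i else A x $ i $ j')"
      by (cases "j' = k")
          (simp_all add: continuous_on_component[OF continuous_on_component[OF cont]])
  qed
  then have "continuous_on S
      (\<lambda>x. det (\<chi> i j'. if j' = k then axis j 1 $ i else A x $ i $ j') / det (A x))"
    using inv invertible_det_nz by (intro continuous_on_divide continuous_on_det cont) auto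
  then show "continuous_on S (\<lambda>x. matrix_inv (A x) $ k $ j)"
    by (rule continuous_on_eq) (simp add: matrix_inv_cramer inv)
qed

lemma continuous_on_blinfun_matrix_image:
  fixes J :: "'a::t2_space \<Rightarrow> real^'m^'n" and P :: "real^'n \<Rightarrow> 'b::real_normed_vector"
  assumes "continuous_on S J" and "bounded_linear P"
  shows "continuous_on S (\<lambda>x. Blinfun (\<lambda>h. P (J x *v h)))"
proof (rule continuous_on_blinfun_componentwise)
  fix e :: "real^'m"
  have "continuous_on S (\<lambda>x. J x *v e)"
    unfolding matrix_vector_mult_def by (intro continuous_intros assms(1))
  then show "continuous_on S (\<lambda>x. Blinfun (\<lambda>h. P (J x *v h)) e)"
    by (simp add: bounded_linear_Blinfun_apply bounded_linear_compose[OF assms(2)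
          matrix_vector_mul_bounded_linear] bounded_linear.continuous_on[OF assms(2)])
qed

lemma left_inverse_of_graph_blinfun:
  fixes A :: "('a::euclidean_space \<times> 'b::euclidean_space) \<Rightarrow>\<^sub>L 'b"
  assumes inj: "inj (\<lambda>k. A (0, k))"
  obtains B where "B o\<^sub>L Blinfun (\<lambda>d. (fst d, A d)) = id_blinfun"
proof
  define L where "L k = A (0, k)" for k
  define B where "B d = (fst d, inv L (snd d - A (fst d, 0)))" for d
  have "inj L"
    using inj by (simp add: L_def[abs_def])
  moreover have "bounded_linear L"
    unfolding L_def by (intro bounded_linear_compose[OF blinfun.bounded_linear_right]
        bounded_linear_Pair bounded_linear_zero bounded_linear_ident)
  ultimately have inv_L: "bounded_linear (inv L)"
    by (intro inj_linear_imp_inv_bounded_linear)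
  have B_apply: "blinfun_apply (Blinfun B) = B"
    unfolding B_def[abs_def]
    by (intro bounded_linear_Blinfun_apply bounded_linear_Pair bounded_linear_fst
        bounded_linear_compose[OF inv_L] bounded_linear_sub bounded_linear_snd
        bounded_linear_compose[OF blinfun.bounded_linear_right] bounded_linear_zero)
  have A_apply: "blinfun_apply (Blinfun (\<lambda>d. (fst d, A d))) = (\<lambda>d. (fst d, A d))"
    by (intro bounded_linear_Blinfun_apply bounded_linear_Pair bounded_linear_fst
        blinfun.bounded_linear_right)
  show "Blinfun B o\<^sub>L Blinfun (\<lambda>d. (fst d, A d)) = id_blinfun"
  proof (rule blinfun_eqI)
    fix d :: "'a \<times> 'b"
    have "A d - A (fst d, 0) = L (snd d)"
      unfolding L_def blinfun.diff_right[symmetric] by (rule arg_cong) (simp add: prod_eq_iff)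
    then show "(Blinfun B o\<^sub>L Blinfun (\<lambda>d. (fst d, A d))) d = id_blinfun d"
      using \<open>inj L\<close> by (simp add: A_apply B_apply B_def)
  qed
qed

lemma local_inverse_of_graph_map:
  fixes G :: "'a::euclidean_space \<Rightarrow> 'b::euclidean_space \<Rightarrow> 'b"
    and G' :: "'a \<times> 'b \<Rightarrow> ('a \<times> 'b) \<Rightarrow>\<^sub>L 'b"
  assumes "open S" and "(x0, z0) \<in> S"
    and derG: "\<And>w. w \<in> S \<Longrightarrow> ((\<lambda>w. G (fst w) (snd w)) has_derivative G' w) (at w)"
    and contG': "continuous_on S G'"
    and "G x0 z0 = 0"
    and "inj (\<lambda>k. G' (x0, z0) (0, k))"
  obtains V g g' where "open V" "(x0, 0) \<in> V" "g (x0, 0) = (x0, z0)"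
    "\<And>w. w \<in> V \<Longrightarrow> fst (g w) = fst w \<and> G (fst (g w)) (snd (g w)) = snd w"
    "\<And>w. w \<in> V \<Longrightarrow> (g has_derivative g' w) (at w)"
    "\<And>w d. w \<in> V \<Longrightarrow> fst (g' w d) = fst d \<and> G' (g w) (g' w d) = snd d"
    "\<And>w. w \<in> V \<Longrightarrow> inj (\<lambda>k. G' (g w) (0, k))"
proof -
  define F where "F w = (fst w, G (fst w) (snd w))" for w
  define F' where "F' w = Blinfun (\<lambda>d. (fst d, G' w d))" for w
  have F'_apply: "blinfun_apply (F' w) = (\<lambda>d. (fst d, G' w d))" for w
    unfolding F'_def
    by (intro bounded_linear_Blinfun_apply bounded_linear_Pair bounded_linear_fst
        blinfun.bounded_linear_right)
  have derF: "(F has_derivative F' w) (at w)" if "w \<in> S" for w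
    unfolding F_def F'_apply
      by (intro has_derivative_Pair has_derivative_fst has_derivative_ident derG that)
  have contF': "continuous_on S F'"
    by (rule continuous_on_blinfun_componentwise)
        (simp add: F'_apply; intro continuous_intros contG')
  obtain invF where "invF o\<^sub>L F' (x0, z0) = id_blinfun"
    using left_inverse_of_graph_blinfun[OF \<open>inj (\<lambda>k. G' (x0, z0) (0, k))\<close>] unfolding F'_def by blast
  then obtain U' V g g' where "(x0, z0) \<in> U'" "open V" "F (x0, z0) \<in> V"
    and hom: "homeomorphism U' V F g"
    and der_g: "\<And>w. w \<in> V \<Longrightarrow> (g has_derivative g' w) (at w)"
    and g'_eq: "\<And>w. w \<in> V \<Longrightarrow> g' w = inv (F' (g w))"
    and bij: "\<And>w. w \<in> V \<Longrightarrow> bij (F' (g w))"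
    using inverse_function_theorem[OF \<open>open S\<close> derF contF' \<open>(x0, z0) \<in> S\<close>] by metis
  show thesis
  proof
    show "open V" by fact
    show "(x0, 0) \<in> V" "g (x0, 0) = (x0, z0)"
      using \<open>F (x0, z0) \<in> V\<close> hom \<open>(x0, z0) \<in> U'\<close> \<open>G x0 z0 = 0\<close>
      by (auto simp: F_def homeomorphism_def)
    fix w assume "w \<in> V"
    then show "fst (g w) = fst w \<and> G (fst (g w)) (snd (g w)) = snd w"
      using hom unfolding homeomorphism_def F_def by (metis prod.collapse prod.inject)
    show "(g has_derivative g' w) (at w)" by (rule der_g[OF \<open>w \<in> V\<close>])
    show "fst (g' w d) = fst d \<and> G' (g w) (g' w d) = snd d" for d
      using bij[OF \<open>w \<in> V\<close>] g'_eq[OF \<open>w \<in> V\<close>]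
      by (metis F'_apply bij_is_surj surj_f_inv_f prod.collapse prod.inject)
    show "inj (\<lambda>k. G' (g w) (0, k))"
      using bij_is_inj[OF bij[OF \<open>w \<in> V\<close>]] by (auto simp: F'_apply inj_def)
  qed
qed

lemma implicit_function_theorem:
  fixes G :: "'a::euclidean_space \<Rightarrow> 'b::euclidean_space \<Rightarrow> 'b"
    and G' :: "'a \<times> 'b \<Rightarrow> ('a \<times> 'b) \<Rightarrow>\<^sub>L 'b"
  assumes "open S" and "(x0, z0) \<in> S"
    and "\<And>w. w \<in> S \<Longrightarrow> ((\<lambda>w. G (fst w) (snd w)) has_derivative G' w) (at w)"
    and "continuous_on S G'"
    and "G x0 z0 = 0"
    and "inj (\<lambda>k. G' (x0, z0) (0, k))"
  obtains W Z Z' where "open W" "x0 \<in> W" "Z x0 = z0"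
    "\<And>x. x \<in> W \<Longrightarrow> G x (Z x) = 0"
    "\<And>x. x \<in> W \<Longrightarrow> (Z has_derivative Z' x) (at x)"
    "\<And>x h. x \<in> W \<Longrightarrow> G' (x, Z x) (h, Z' x h) = 0"
    "\<And>x. x \<in> W \<Longrightarrow> inj (\<lambda>k. G' (x, Z x) (0, k))"
proof -
  obtain V g g' where "open V" "(x0, 0) \<in> V" "g (x0, 0) = (x0, z0)"
    and g: "\<And>w. w \<in> V \<Longrightarrow> fst (g w) = fst w \<and> G (fst (g w)) (snd (g w)) = snd w"
    and der_g: "\<And>w. w \<in> V \<Longrightarrow> (g has_derivative g' w) (at w)"
    and g': "\<And>w d. w \<in> V \<Longrightarrow> fst (g' w d) = fst d \<and> G' (g w) (g' w d) = snd d"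
    and inj: "\<And>w. w \<in> V \<Longrightarrow> inj (\<lambda>k. G' (g w) (0, k))"
    using local_inverse_of_graph_map[OF assms] by blast
  define W where "W = {x. (x, 0) \<in> V}"
  define Z where "Z x = snd (g (x, 0))" for x
  define Z' where "Z' x h = snd (g' (x, 0) (h, 0))" for x h
  have g_eq: "g (x, 0) = (x, Z x)" if "x \<in> W" for x
    using g[of "(x, 0)"] that by (simp add: W_def Z_def prod_eq_iff)
  have g'_eq: "g' (x, 0) (h, 0) = (h, Z' x h)" if "x \<in> W" for x h
    using g'[of "(x, 0)" "(h, 0)"] that by (simp add: W_def Z'_def prod_eq_iff)
  show thesis
  proof
    show "open W"
      unfolding W_def by (rule open_vimage[OF \<open>open V\<close>, of "\<lambda>x. (x, 0)", unfolded vimage_def])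
        (intro continuous_intros)
    show "x0 \<in> W" "Z x0 = z0"
      using \<open>(x0, 0) \<in> V\<close> \<open>g (x0, 0) = (x0, z0)\<close> by (simp_all add: W_def Z_def)
    fix x assume "x \<in> W"
    then have V: "(x, 0) \<in> V" by (simp add: W_def)
    show "G x (Z x) = 0"
      using g[OF V] by (simp add: g_eq[OF \<open>x \<in> W\<close>])
    have "((\<lambda>x. (x, 0)) has_derivative (\<lambda>h. (h, 0))) (at x)"
      by (intro has_derivative_Pair has_derivative_ident has_derivative_const)
    from has_derivative_compose[OF this der_g[OF V]]
    show "(Z has_derivative Z' x) (at x)"
      unfolding Z_def[abs_def] Z'_def[abs_def] by (rule has_derivative_snd)
    show "G' (x, Z x) (h, Z' x h) = 0" for h
      using g'[OF V, of "(h, 0)"] by (simp add: g_eq[OF \<open>x \<in> W\<close>] g'_eq[OF \<open>x \<in> W\<close>])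
    show "inj (\<lambda>k. G' (x, Z x) (0, k))"
      using inj[OF V] by (simp add: g_eq[OF \<open>x \<in> W\<close>])
  qed
qed

section \<open>Minimisers as stationary points\<close>

definition loss_slopes :: "(real \<Rightarrow> real) \<Rightarrow> real^'n \<Rightarrow> real^'n \<Rightarrow> real^'n" where
  "loss_slopes l1 y m = (\<chi> i. y$i * l1 (m$i))"

definition loss_curvatures :: "(real \<Rightarrow> real) \<Rightarrow> real^'n \<Rightarrow> real^'n \<Rightarrow> real^'n" where
  "loss_curvatures l2 c m = (\<chi> i. c$i * l2 (m$i))"

text \<open>
  The gradient of the objective is (K (a + c \<circ> u), \<Sum>_i c_i u_i) with u the loss slopes at
  the margins; the factor K is dropped since it is invertible.
\<close>
definition stationary :: "(real \<Rightarrow> real) \<Rightarrow> real^'n^'n \<Rightarrow> real^'n \<Rightarrow> real^'n \<Rightarrow> real^'n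
    \<Rightarrow> real \<Rightarrow> bool" where
  "stationary l1 K y c a b \<longleftrightarrow>
     a + (\<chi> i. c$i * loss_slopes l1 y (margin K y a b) $ i) = 0 \<and>
     (\<Sum>i\<in>UNIV. c$i * loss_slopes l1 y (margin K y a b) $ i) = 0"

locale kernel_svm =
  fixes K :: "real^'n^'n" and y :: "real^'n" and l l1 l2 :: "real \<Rightarrow> real"
  assumes labels: "\<And>i. y$i = 1 \<or> y$i = -1"
    and K_sym: "transpose K = K"
    and K_pos_def: "\<And>x. x \<noteq> 0 \<Longrightarrow> x \<bullet> (K *v x) > 0"
    and loss_convex: "convex_on UNIV l"
    and loss_deriv: "\<And>x. (l has_real_derivative l1 x) (at x)"
    and loss_deriv2: "\<And>x. (l1 has_real_derivative l2 x) (at x)"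
    and loss_deriv2_cont: "continuous_on UNIV l2"
begin

lemma K_inner_commute: "x \<bullet> (K *v z) = z \<bullet> (K *v x)"
  by (metis dot_lmul_matrix inner_commute K_sym transpose_matrix_vector)

lemma K_nonneg: "x \<bullet> (K *v x) \<ge> 0"
  using K_pos_def by (cases "x = 0") (auto intro: less_imp_le)

lemma tangent_gap_nonneg: "l t' - l t - l1 t * (t' - t) \<ge> 0"
  using convex_deriv_above_tangent[OF loss_convex loss_deriv] by (simp add: algebra_simps)

lemma objective_expansion:
  assumes "stationary l1 K y c a b"
  shows "svm_obj l K y c a' b' - svm_obj l K y c a b =
     1/2 * ((a' - a) \<bullet> (K *v (a' - a))) +
     (\<Sum>i\<in>UNIV. c$i * (l (margin K y a' b' $ i) - l (margin K y a b $ i)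
         - l1 (margin K y a b $ i) * (margin K y a' b' $ i - margin K y a b $ i)))"
proof -
  define h where "h = a' - a"
  define t where "t = margin K y a b"
  define t' where "t' = margin K y a' b'"
  define q where "q = (\<chi> i. c$i * loss_slopes l1 y t $ i)"
  have q: "q = - a" "(\<Sum>i\<in>UNIV. q$i) = 0"
    using assms unfolding stationary_def q_def t_def
      by (simp_all add: eq_neg_iff_add_eq_0 add.commute)
  have t_diff: "t' $ i - t $ i = y$i * ((K *v h)$i + (b' - b))" for i
    by (simp add: t_def t'_def margin_def K_sym h_def matrix_vector_mult_diff_distrib algebra_simps)
  have "(\<Sum>i\<in>UNIV. c$i * (l1 (t$i) * (t'$i - t$i)))
      = (\<Sum>i\<in>UNIV. q$i * (K *v h)$i + (b' - b) * q$i)"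
    by (rule sum.cong) (simp_all add: t_diff q_def loss_slopes_def algebra_simps)
  also have "\<dots> = (\<Sum>i\<in>UNIV. q$i * (K *v h)$i) + (b' - b) * (\<Sum>i\<in>UNIV. q$i)"
    by (simp add: sum.distrib sum_distrib_left)
  also have "\<dots> = q \<bullet> (K *v h)"
    by (simp add: q(2) inner_vec_def)
  also have "\<dots> = - (a \<bullet> (K *v h))"
    by (simp add: q(1))
  finally have linear_part: "(\<Sum>i\<in>UNIV. c$i * (l1 (t$i) * (t'$i - t$i))) = - (a \<bullet> (K *v h))" .
  have quadratic_part: "1/2 * (a' \<bullet> (K *v a')) - 1/2 * (a \<bullet> (K *v a))
      = 1/2 * (h \<bullet> (K *v h)) + a \<bullet> (K *v h)"
    using K_inner_commute[of h a]
    by (simp add: h_def matrix_vector_right_distrib inner_diff_left inner_diff_right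
        matrix_vector_mult_diff_distrib algebra_simps)
  have "svm_obj l K y c a' b' - svm_obj l K y c a b
     = (1/2 * (a' \<bullet> (K *v a')) - 1/2 * (a \<bullet> (K *v a)))
       + (\<Sum>i\<in>UNIV. c$i * (l (t'$i) - l (t$i) - l1 (t$i) * (t'$i - t$i)))
       + (\<Sum>i\<in>UNIV. c$i * (l1 (t$i) * (t'$i - t$i)))"
    by (simp add: svm_obj_def t_def t'_def margin_def sum_subtractf[symmetric]
        sum.distrib[symmetric] algebra_simps)
  then show ?thesis
    unfolding quadratic_part linear_part by (simp add: h_def t_def t'_def)
qed

lemma stationary_imp_solution:
  assumes c: "\<forall>i. c$i \<ge> 0" and stat: "stationary l1 K y c a b"
  shows "is_solution l K y c a b"
  unfolding is_solution_def
proof (intro allI)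
  fix a' b'
  have "(\<Sum>i\<in>UNIV. c$i * (l (margin K y a' b' $ i) - l (margin K y a b $ i)
       - l1 (margin K y a b $ i) * (margin K y a' b' $ i - margin K y a b $ i))) \<ge> 0"
    using c tangent_gap_nonneg by (intro sum_nonneg mult_nonneg_nonneg) auto
  then show "svm_obj l K y c a b \<le> svm_obj l K y c a' b'"
    using objective_expansion[OF stat, of a' b'] K_nonneg[of "a' - a"] by linarith
qed

text \<open>
  A second minimiser makes both terms of the expansion vanish: the quadratic term forces
  a' = a, and the tangent gap at a coordinate with c_i l2 (t_i) \<noteq> 0 forces b' = b.
\<close>
lemma solution_unique:
  assumes c: "\<forall>i. c$i \<ge> 0" and stat: "stationary l1 K y c a b"
    and v: "loss_curvatures l2 c (margin K y a b) \<noteq> 0"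
    and sol: "is_solution l K y c a' b'"
  shows "a' = a \<and> b' = b"
proof -
  define gap where "gap i = c$i * (l (margin K y a' b' $ i) - l (margin K y a b $ i)
         - l1 (margin K y a b $ i) * (margin K y a' b' $ i - margin K y a b $ i))" for i
  have gap_nonneg: "gap i \<ge> 0" for i
    using c tangent_gap_nonneg unfolding gap_def by (simp add: mult_nonneg_nonneg)
  have "svm_obj l K y c a' b' \<le> svm_obj l K y c a b"
    using sol unfolding is_solution_def by blast
  then have "1/2 * ((a' - a) \<bullet> (K *v (a' - a))) + (\<Sum>i\<in>UNIV. gap i) \<le> 0"
    using objective_expansion[OF stat, of a' b'] by (simp add: gap_def)
  moreover have "(\<Sum>i\<in>UNIV. gap i) \<ge> 0" using gap_nonneg by (simp add: sum_nonneg)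
  ultimately have "(a' - a) \<bullet> (K *v (a' - a)) = 0" and "(\<Sum>i\<in>UNIV. gap i) = 0"
    using K_nonneg[of "a' - a"] by linarith+
  then have a': "a' = a" and gap_zero: "\<And>i. gap i = 0"
    using K_pos_def[of "a' - a"] gap_nonneg by (auto simp: sum_nonneg_eq_0_iff)
  obtain i where vi: "c$i * l2 (margin K y a b $ i) \<noteq> 0"
    using v by (auto simp: loss_curvatures_def vec_eq_iff)
  have "b' = b"
  proof (rule ccontr)
    assume "b' \<noteq> b"
    then have "y$i * (b' - b) \<noteq> 0" using labels[of i] by auto
    moreover have "l2 (margin K y a b $ i) \<noteq> 0" using vi by simp
    ultimately have "l (margin K y a b $ i + y$i * (b' - b)) - l (margin K y a b $ i)
        - l1 (margin K y a b $ i) * (y$i * (b' - b)) > 0"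
      by (rule convex_strictly_above_tangent[OF loss_convex loss_deriv loss_deriv2, rotated])
    moreover have "c$i > 0" using vi c by (metis less_eq_real_def mult_eq_0_iff)
    moreover have "margin K y a' b' $ i = margin K y a b $ i + y$i * (b' - b)"
      by (simp add: a' margin_def algebra_simps)
    ultimately have "gap i > 0"
      unfolding gap_def by simp
    with gap_zero show False by simp
  qed
  with a' show ?thesis by simp
qed

lemma solution_iff_stationary_point:
  assumes "\<forall>i. c$i \<ge> 0" and "stationary l1 K y c a b"
    and "loss_curvatures l2 c (margin K y a b) \<noteq> 0"
  shows "is_solution l K y c a' b' \<longleftrightarrow> a' = a \<and> b' = b"
  using stationary_imp_solution[OF assms(1,2)] solution_unique[OF assms] by blast

text \<open>The left-hand side is the derivative of the objective at (a, b) in the direction (w, \<sigma>).\<close>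
lemma solution_first_variation:
  assumes sol: "is_solution l K y c a b"
  shows "w \<bullet> (K *v a) + (\<Sum>i\<in>UNIV. c$i * (l1 (margin K y a b $ i) * (y$i * ((K *v w)$i + \<sigma>)))) = 0"
proof -
  define t where "t = margin K y a b"
  define q where "q i = y$i * ((K *v w)$i + \<sigma>)" for i
  define \<phi> where "\<phi> \<tau> = 1/2 * (a \<bullet> (K *v a) + \<tau> * (2 * (w \<bullet> (K *v a))) + \<tau>^2 * (w \<bullet> (K *v w)))
      + (\<Sum>i\<in>UNIV. c$i * l (t$i + \<tau> * q i))" for \<tau>
  have \<phi>_eq: "\<phi> \<tau> = svm_obj l K y c (a + \<tau> *\<^sub>R w) (b + \<tau> * \<sigma>)" for \<tau>
  proof -
    have "(a + \<tau> *\<^sub>R w) \<bullet> (K *v (a + \<tau> *\<^sub>R w))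
        = a \<bullet> (K *v a) + \<tau> * (2 * (w \<bullet> (K *v a))) + \<tau>^2 * (w \<bullet> (K *v w))"
      using K_inner_commute[of a w]
      by (simp add: matrix_vector_right_distrib matrix_vector_mult_scaleR
          inner_add_left inner_add_right power2_eq_square algebra_simps)
    moreover have "y$i * ((transpose K *v (a + \<tau> *\<^sub>R w))$i + (b + \<tau> * \<sigma>)) = t$i + \<tau> * q i" for i
      by (simp add: K_sym t_def q_def margin_def matrix_vector_right_distrib
          matrix_vector_mult_scaleR algebra_simps)
    ultimately show ?thesis by (simp add: \<phi>_def svm_obj_def)
  qed
  have "((\<lambda>\<tau>. c$i * l (t$i + \<tau> * q i)) has_real_derivative c$i * (l1 (t$i + 0 * q i) * q i)) (at 0)"
    for i by (intro DERIV_cmult DERIV_chain2[OF loss_deriv]) (auto intro!: derivative_eq_intros)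
  then have "((\<lambda>\<tau>. \<Sum>i\<in>UNIV. c$i * l (t$i + \<tau> * q i))
      has_real_derivative (\<Sum>i\<in>UNIV. c$i * (l1 (t$i) * q i))) (at 0)"
    by (auto intro!: DERIV_sum)
  moreover have "((\<lambda>\<tau>. 1/2 * (a \<bullet> (K *v a) + \<tau> * (2 * (w \<bullet> (K *v a))) + \<tau>^2 * (w \<bullet> (K *v w))))
      has_real_derivative w \<bullet> (K *v a)) (at 0)"
    by (auto intro!: derivative_eq_intros)
  ultimately have "(\<phi> has_real_derivative
      (w \<bullet> (K *v a) + (\<Sum>i\<in>UNIV. c$i * (l1 (t$i) * q i)))) (at 0)"
    unfolding \<phi>_def using DERIV_add by blast
  then have "w \<bullet> (K *v a) + (\<Sum>i\<in>UNIV. c$i * (l1 (t$i) * q i)) = 0"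
    by (rule DERIV_local_min[of _ _ _ 1]) (use sol in \<open>simp_all add: is_solution_def \<phi>_eq\<close>)
  then show ?thesis by (simp add: q_def t_def)
qed

lemma solution_imp_stationary:
  assumes sol: "is_solution l K y c a b"
  shows "stationary l1 K y c a b"
proof -
  define q where "q = (\<chi> i. c$i * loss_slopes l1 y (margin K y a b) $ i)"
  have "(\<Sum>i\<in>UNIV. q$i) = 0"
    using solution_first_variation[OF sol, of 0 1]
      by (simp add: q_def loss_slopes_def algebra_simps)
  moreover have "a + q = 0"
  proof -
    define w where "w = a + q"
    have "w \<bullet> (K *v a) + (\<Sum>i\<in>UNIV. q$i * (K *v w)$i) = 0"
      using solution_first_variation[OF sol, of w 0]
        by (simp add: q_def loss_slopes_def algebra_simps)
    then have "w \<bullet> (K *v a) + w \<bullet> (K *v q) = 0"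
      using K_inner_commute[of q w] by (simp add: inner_vec_def)
    then have "w \<bullet> (K *v w) = 0"
      by (simp add: w_def matrix_vector_right_distrib inner_add_right)
    then show ?thesis using K_pos_def w_def by (metis order_less_irrefl)
  qed
  ultimately show ?thesis by (simp add: stationary_def q_def)
qed

end

section \<open>The stacked stationarity system\<close>

definition stack :: "real^'n \<Rightarrow> real \<Rightarrow> real^('n option)" where
  "stack a b = (\<chi> p. case p of Some i \<Rightarrow> a$i | None \<Rightarrow> b)"

definition stack_alpha :: "real^('n option) \<Rightarrow> real^'n" where
  "stack_alpha z = (\<chi> i. z $ Some i)"

lemma stack_alpha_stack [simp]: "stack_alpha (stack a b) = a"
  by (simp add: stack_alpha_def stack_def)

lemma stack_None [simp]: "stack a b $ None = b"
  by (simp add: stack_def)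

lemma bounded_linear_stack_alpha: "bounded_linear stack_alpha"
  by (simp add: linear_conv_bounded_linear[symmetric] linearI stack_alpha_def vec_eq_iff)

definition stacked_margin :: "real^'n^'n \<Rightarrow> real^'n \<Rightarrow> real^('n option) \<Rightarrow> real^'n" where
  "stacked_margin K y z = margin K y (stack_alpha z) (z $ None)"

lemma stacked_margin_stack [simp]: "stacked_margin K y (stack a b) = margin K y a b"
  by (simp add: stacked_margin_def)

lemma stacked_margin_component:
  "stacked_margin K y z $ i = y$i * ((\<Sum>j\<in>UNIV. K$j$i * z $ Some j) + z $ None)"
  by (simp add: stacked_margin_def margin_def stack_alpha_def matrix_vector_mult_def transpose_def)

lemma continuous_on_stacked_margin:
  "continuous_on S z \<Longrightarrow> continuous_on S (\<lambda>x. stacked_margin K y (z x))"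
  by (intro continuous_on_vec_components)
      (simp add: stacked_margin_component; intro continuous_intros)

lemma kkt_matrix_mult_Some:
  "(kkt_matrix K v *v z) $ Some i = z $ Some i + v$i * (K *v stack_alpha z)$i + v$i * z $ None"
proof -
  have "(kkt_matrix K v *v z) $ Some i
      = v$i * z $ None + (\<Sum>j\<in>UNIV. ((if i = j then 1 else 0) + v$i * K$i$j) * z $ Some j)"
    by (simp add: kkt_matrix_def matrix_vector_mult_def sum_UNIV_option mult.commute)
  also have "\<dots> = v$i * z $ None
      + (\<Sum>j\<in>UNIV. (if i = j then z $ Some j else 0) + v$i * (K$i$j * z $ Some j))"
    by (intro arg_cong2[where f="(+)"] refl sum.cong) (simp_all add: algebra_simps)
  finally show ?thesis
    by (simp add: sum.distrib sum_distrib_left stack_alpha_def matrix_vector_mult_def)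
qed

lemma kkt_matrix_mult_None: "(kkt_matrix K v *v z) $ None = (\<Sum>j\<in>UNIV. z $ Some j)"
  by (simp add: kkt_matrix_def matrix_vector_mult_def sum_UNIV_option)

lemma rhs_matrix_mult_Some: "(rhs_matrix u *v x) $ Some i = u$i * x$i"
proof -
  have "(rhs_matrix u *v x) $ Some i = (\<Sum>j\<in>UNIV. (if i = j then u$i else 0) * x$j)"
    by (simp add: rhs_matrix_def matrix_vector_mult_def)
  also have "\<dots> = (\<Sum>j\<in>UNIV. if i = j then u$i * x$j else 0)"
    by (rule sum.cong) auto
  finally show ?thesis by simp
qed

lemma rhs_matrix_mult_None: "(rhs_matrix u *v x) $ None = 0"
  by (simp add: rhs_matrix_def matrix_vector_mult_def)

text \<open>
  For a kernel vector (x, s) we have x = - v \<circ> (K x + s 1) and \<Sum>_i x_i = 0, hence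
  x^T K x = x^T (K x + s 1) = - \<Sum>_i v_i (K x + s 1)_i^2 \<le> 0; so x = 0, and then v s = 0.
\<close>
lemma invertible_kkt_matrix:
  fixes K :: "real^'n^'n"
  assumes pd: "\<And>x. x \<noteq> 0 \<Longrightarrow> x \<bullet> (K *v x) > 0"
    and v_nonneg: "\<forall>i. v$i \<ge> 0" and "v \<noteq> 0"
  shows "invertible (kkt_matrix K v)"
proof (rule invertible_if_trivial_kernel)
  fix z :: "real^'n option" assume z: "kkt_matrix K v *v z = 0"
  define x where "x = stack_alpha z"
  define s where "s = z $ None"
  define w where "w = K *v x + (\<chi> i. s)"
  have x: "x$i = - (v$i * w$i)" for i
    using arg_cong[OF z, of "\<lambda>z. z $ Some i"]
    by (simp add: kkt_matrix_mult_Some w_def x_def s_def stack_alpha_def algebra_simps)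
  have sum_x: "(\<Sum>i\<in>UNIV. x$i) = 0"
    using arg_cong[OF z, of "\<lambda>z. z $ None"]
      by (simp add: kkt_matrix_mult_None x_def stack_alpha_def)
  have "x \<bullet> (K *v x) = (\<Sum>i\<in>UNIV. x$i * (w$i - s))"
    by (simp add: inner_vec_def w_def)
  also have "\<dots> = (\<Sum>i\<in>UNIV. x$i * w$i) - s * (\<Sum>i\<in>UNIV. x$i)"
    by (simp add: right_diff_distrib sum_subtractf sum_distrib_left algebra_simps)
  also have "\<dots> = (\<Sum>i\<in>UNIV. x$i * w$i)"
    by (simp add: sum_x)
  also have "\<dots> = - (\<Sum>i\<in>UNIV. v$i * (w$i)^2)"
    by (simp only: x) (simp add: power2_eq_square sum_negf mult.assoc)
  also have "\<dots> \<le> 0"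
    using v_nonneg by (simp add: sum_nonneg)
  finally have x0: "x = 0"
    using pd by (metis not_less)
  obtain i where "v$i \<noteq> 0"
    using \<open>v \<noteq> 0\<close> by (metis vec_eq_iff zero_index)
  moreover have "v$i * s = 0"
  proof -
    have "z $ Some i = 0" using x0 by (simp add: x_def stack_alpha_def vec_eq_iff)
    then show ?thesis
      using arg_cong[OF z, of "\<lambda>z. z $ Some i"] x0 by (simp add: kkt_matrix_mult_Some x_def s_def)
  qed
  ultimately have "s = 0" by simp
  with x0 show "z = 0"
    unfolding vec_eq_iff
      by (metis option.exhaust x_def s_def stack_alpha_def vec_lambda_beta zero_index)
qed

lemma continuous_on_kkt_matrix:
  assumes "continuous_on S v"
  shows "continuous_on S (\<lambda>x. kkt_matrix K (v x))"
proof (intro continuous_on_vec_components)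
  fix p q show "continuous_on S (\<lambda>x. kkt_matrix K (v x) $ p $ q)"
    by (cases p; cases q)
      (simp_all add: kkt_matrix_def continuous_on_add continuous_on_mult
           continuous_on_component[OF assms])
qed

lemma continuous_on_rhs_matrix:
  assumes "continuous_on S u"
  shows "continuous_on S (\<lambda>x. rhs_matrix (u x))"
proof (intro continuous_on_vec_components)
  fix p q show "continuous_on S (\<lambda>x. rhs_matrix (u x) $ p $ q)"
    by (cases p; cases "p = Some q")
        (simp_all add: rhs_matrix_def continuous_on_component[OF assms])
qed

text \<open>
  Stationarity with the second condition replaced by \<Sum>_i \<alpha>_i = 0, so that the Jacobian in z
  is exactly kkt_matrix.
\<close>
definition kkt_residual :: "(real \<Rightarrow> real) \<Rightarrow> real^'n^'n \<Rightarrow> real^'n \<Rightarrow> real^'n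
    \<Rightarrow> real^('n option) \<Rightarrow> real^('n option)" where
  "kkt_residual l1 K y c z = (\<chi> p. case p of
       Some i \<Rightarrow> z $ Some i + c$i * loss_slopes l1 y (stacked_margin K y z) $ i
     | None \<Rightarrow> \<Sum>i\<in>UNIV. z $ Some i)"

lemma kkt_residual_eq_0_iff:
  "kkt_residual l1 K y c z = 0 \<longleftrightarrow> stationary l1 K y c (stack_alpha z) (z $ None)"
proof -
  define q where "q = (\<chi> i. c$i * loss_slopes l1 y (stacked_margin K y z) $ i)"
  have "kkt_residual l1 K y c z = 0 \<longleftrightarrow> stack_alpha z + q = 0 \<and> (\<Sum>i\<in>UNIV. z $ Some i) = 0"
    by (auto simp: kkt_residual_def q_def stack_alpha_def vec_eq_iff split: option.split)
  also have "\<dots> \<longleftrightarrow> stack_alpha z + q = 0 \<and> (\<Sum>i\<in>UNIV. q$i) = 0"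
    by (auto simp: vec_eq_iff stack_alpha_def eq_neg_iff_add_eq_0[symmetric] sum_negf)
  finally show ?thesis
    by (simp add: stationary_def q_def stacked_margin_def)
qed

definition kkt_residual_deriv :: "(real \<Rightarrow> real) \<Rightarrow> (real \<Rightarrow> real) \<Rightarrow> real^'n^'n \<Rightarrow> real^'n
    \<Rightarrow> (real^'n) \<times> (real^('n option))
    \<Rightarrow> ((real^'n) \<times> (real^('n option))) \<Rightarrow>\<^sub>L (real^('n option))" where
  "kkt_residual_deriv l1 l2 K y w = Blinfun (\<lambda>d.
     rhs_matrix (loss_slopes l1 y (stacked_margin K y (snd w))) *v fst d
     + kkt_matrix K (loss_curvatures l2 (fst w) (stacked_margin K y (snd w))) *v snd d)"

lemma kkt_residual_deriv_apply:
  "kkt_residual_deriv l1 l2 K y w d =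
     rhs_matrix (loss_slopes l1 y (stacked_margin K y (snd w))) *v fst d
     + kkt_matrix K (loss_curvatures l2 (fst w) (stacked_margin K y (snd w))) *v snd d"
  unfolding kkt_residual_deriv_def
  by (subst bounded_linear_Blinfun_apply)
    (auto intro!: bounded_linear_add bounded_linear_compose[OF matrix_vector_mul_bounded_linear]
      bounded_linear_fst bounded_linear_snd)

definition solution_jacobian :: "(real \<Rightarrow> real) \<Rightarrow> (real \<Rightarrow> real) \<Rightarrow> real^'n^'n \<Rightarrow> real^'n
    \<Rightarrow> real^'n \<Rightarrow> real^('n option) \<Rightarrow> real^'n^('n option)" where
  "solution_jacobian l1 l2 K y c z =
     - (matrix_inv (kkt_matrix K (loss_curvatures l2 c (stacked_margin K y z)))
        ** rhs_matrix (loss_slopes l1 y (stacked_margin K y z)))"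

context kernel_svm
begin

lemma loss_deriv_continuous: "continuous_on UNIV l1"
  using loss_deriv2 by (intro continuous_at_imp_continuous_on) (auto intro: DERIV_isCont)

lemma continuous_on_loss_slopes:
  "continuous_on S m \<Longrightarrow> continuous_on S (\<lambda>x. loss_slopes l1 y (m x))"
  unfolding loss_slopes_def
  by (intro continuous_intros continuous_on_compose2[OF loss_deriv_continuous]) auto

lemma continuous_on_loss_curvatures:
  "continuous_on S c \<Longrightarrow> continuous_on S m \<Longrightarrow> continuous_on S (\<lambda>x. loss_curvatures l2 (c x) (m x))"
  unfolding loss_curvatures_def
  by (intro continuous_intros continuous_on_compose2[OF loss_deriv2_cont]) auto

lemma continuous_on_kkt_residual_deriv: "continuous_on UNIV (kkt_residual_deriv l1 l2 K y)"
proof (rule continuous_on_blinfun_componentwise)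
  fix d :: "(real^'n) \<times> (real^('n option))"
  have "continuous_on UNIV (\<lambda>w::(real^'n) \<times> (real^('n option)). stacked_margin K y (snd w))"
    by (intro continuous_on_stacked_margin continuous_intros)
  then show "continuous_on UNIV (\<lambda>w. kkt_residual_deriv l1 l2 K y w d)"
    unfolding kkt_residual_deriv_apply matrix_vector_mult_def
    by (intro continuous_intros continuous_on_rhs_matrix continuous_on_kkt_matrix
        continuous_on_loss_slopes continuous_on_loss_curvatures)
qed

end

section \<open>Differentiable dependence on the weights\<close>

lemma stacked_jacobian_of_matrix:
  "stacked_jacobian (\<lambda>h. stack_alpha (J *v h)) (\<lambda>h. (J *v h) $ None) = J"
  unfolding vec_eq_iff
proof (intro allI)
  fix p j
  show "stacked_jacobian (\<lambda>h. stack_alpha (J *v h)) (\<lambda>h. (J *v h) $ None) $ p $ j = J $ p $ j"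
    by (cases p) (simp_all add: stacked_jacobian_def stack_alpha_def matrix_vector_mult_axis)
qed

context kernel_svm
begin

lemma has_derivative_kkt_residual:
  "((\<lambda>w. kkt_residual l1 K y (fst w) (snd w)) has_derivative kkt_residual_deriv l1 l2 K y w) (at w)"
proof -
  define m where "m = stacked_margin K y (snd w)"
  have component: "((\<lambda>w. kkt_residual l1 K y (fst w) (snd w) $ p) has_derivative
      (\<lambda>d. kkt_residual_deriv l1 l2 K y w d $ p)) (at w)" for p
  proof (cases p)
    case None
    have "((\<lambda>w. \<Sum>j\<in>UNIV. snd w $ Some j) has_derivative (\<lambda>d. \<Sum>j\<in>UNIV. snd d $ Some j)) (at w)"
      by (intro has_derivative_sum has_derivative_vec_nth has_derivative_snd has_derivative_ident)
    with None show ?thesis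
      by (simp add: kkt_residual_def kkt_residual_deriv_apply kkt_matrix_mult_None
           rhs_matrix_mult_None)
  next
    case (Some i)
    define dm where
      "dm (d :: (real^'n) \<times> (real^('n option))) = y$i * ((\<Sum>j\<in>UNIV. K$j$i * snd d $ Some j) + snd d $ None)"
      for d
    have margin: "((\<lambda>w. stacked_margin K y (snd w) $ i) has_derivative dm) (at w)"
      unfolding stacked_margin_component dm_def[abs_def]
      by (intro has_derivative_mult_right has_derivative_add has_derivative_sum
          has_derivative_vec_nth has_derivative_snd has_derivative_ident)
    have "((\<lambda>w. snd w $ Some i + fst w $ i * (y$i * l1 (stacked_margin K y (snd w) $ i)))
        has_derivative (\<lambda>d. snd d $ Some i + (fst w $ i * (y$i * (dm d * l2 (m$i)))
          + fst d $ i * (y$i * l1 (m$i))))) (at w)"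
      unfolding m_def
      by (intro has_derivative_add has_derivative_mult has_derivative_mult_right
          DERIV_compose_FDERIV[OF loss_deriv2 margin]
          has_derivative_vec_nth[OF has_derivative_fst[OF has_derivative_ident]]
          has_derivative_vec_nth[OF has_derivative_snd[OF has_derivative_ident]])
    moreover have "snd d $ Some i + (fst w $ i * (y$i * (dm d * l2 (m$i)))
        + fst d $ i * (y$i * l1 (m$i)))
        = kkt_residual_deriv l1 l2 K y w d $ Some i" for d
    proof -
      have "K$j$i = K$i$j" for j
        by (metis K_sym transpose_def vec_lambda_beta)
      then have "(K *v stack_alpha (snd d))$i = (\<Sum>j\<in>UNIV. K$j$i * snd d $ Some j)"
        by (simp add: matrix_vector_mult_def stack_alpha_def)
      then show ?thesis
        using labels[of i]
        by (elim disjE) (simp_all add: kkt_residual_deriv_apply kkt_matrix_mult_Some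
            rhs_matrix_mult_Some m_def[symmetric] dm_def loss_slopes_def loss_curvatures_def
            algebra_simps)
    qed
    ultimately show ?thesis
      using Some by (simp add: kkt_residual_def loss_slopes_def)
  qed
  have "((\<lambda>w. \<chi> p. kkt_residual l1 K y (fst w) (snd w) $ p) has_derivative
      (\<lambda>d. \<chi> p. kkt_residual_deriv l1 l2 K y w d $ p)) (at w)"
    by (rule has_derivative_vec_lambda[OF component])
  then show ?thesis
    unfolding vec_lambda_eta .
qed

lemma continuous_on_solution_jacobian:
  assumes "continuous_on S Z"
    and "\<And>x. x \<in> S \<Longrightarrow> invertible (kkt_matrix K (loss_curvatures l2 x (stacked_margin K y (Z x))))"
  shows "continuous_on S (\<lambda>x. solution_jacobian l1 l2 K y x (Z x))"
  unfolding solution_jacobian_def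
  by (intro continuous_on_minus continuous_on_matrix_mult continuous_on_matrix_inv
      continuous_on_kkt_matrix continuous_on_rhs_matrix continuous_on_loss_slopes
      continuous_on_loss_curvatures continuous_on_stacked_margin continuous_on_id assms)

lemma stationary_branch:
  assumes stat: "stationary l1 K y c a0 b0"
    and inv: "invertible (kkt_matrix K (loss_curvatures l2 c (margin K y a0 b0)))"
  obtains W Z where "open W" "c \<in> W" "Z c = stack a0 b0" "continuous_on W Z"
    "\<And>x. x \<in> W \<Longrightarrow> stationary l1 K y x (stack_alpha (Z x)) (Z x $ None)"
    "\<And>x. x \<in> W \<Longrightarrow> (Z has_derivative (*v) (solution_jacobian l1 l2 K y x (Z x))) (at x)"
    "continuous_on W (\<lambda>x. solution_jacobian l1 l2 K y x (Z x))"
proof -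
  define M where "M x z = kkt_matrix K (loss_curvatures l2 x (stacked_margin K y z))" for x z
  define R where "R z = rhs_matrix (loss_slopes l1 y (stacked_margin K y z))" for z
  have partial_z: "(\<lambda>k. kkt_residual_deriv l1 l2 K y (x, z) (0, k)) = (*v) (M x z)" for x z
    by (simp add: kkt_residual_deriv_apply M_def fun_eq_iff)
  have "kkt_residual l1 K y c (stack a0 b0) = 0"
    using stat by (simp add: kkt_residual_eq_0_iff)
  moreover have "inj (\<lambda>k. kkt_residual_deriv l1 l2 K y (c, stack a0 b0) (0, k))"
    using inj_matrix_vector_mult[OF inv] by (simp add: partial_z M_def)
  ultimately obtain W Z Z' where "open W" "c \<in> W" "Z c = stack a0 b0"
    and zero: "\<And>x. x \<in> W \<Longrightarrow> kkt_residual l1 K y x (Z x) = 0"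
    and der: "\<And>x. x \<in> W \<Longrightarrow> (Z has_derivative Z' x) (at x)"
    and lin: "\<And>x h. x \<in> W \<Longrightarrow> kkt_residual_deriv l1 l2 K y (x, Z x) (h, Z' x h) = 0"
    and inj: "\<And>x. x \<in> W \<Longrightarrow> inj (\<lambda>k. kkt_residual_deriv l1 l2 K y (x, Z x) (0, k))"
    using implicit_function_theorem[OF open_UNIV UNIV_I has_derivative_kkt_residual
        continuous_on_kkt_residual_deriv] by blast
  have invertible: "invertible (M x (Z x))" if "x \<in> W" for x
    using inj[OF that] unfolding partial_z
    by (intro invertible_if_trivial_kernel) (metis injD matrix_vector_mult_0_right)
  have Z': "Z' x = (*v) (solution_jacobian l1 l2 K y x (Z x))" if "x \<in> W" for x
  proof
    fix h
    have "M x (Z x) *v Z' x h = - (R (Z x) *v h)"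
        using lin[OF that, of h]
      by (simp add: kkt_residual_deriv_apply M_def R_def eq_neg_iff_add_eq_0 add.commute)
    then have "matrix_inv (M x (Z x)) *v (M x (Z x) *v Z' x h)
        = - (matrix_inv (M x (Z x)) *v (R (Z x) *v h))"
      by (simp add: matrix_vector_mult_uminus_right)
    then show "Z' x h = solution_jacobian l1 l2 K y x (Z x) *v h"
      by (simp add: matrix_vector_mul_assoc matrix_inv_left[OF invertible[OF that], unfolded M_def]
          solution_jacobian_def matrix_vector_mult_uminus_left M_def R_def)
  qed
  have "continuous_on W Z"
    using der by (intro continuous_at_imp_continuous_on) (auto dest: has_derivative_continuous)
  show thesis
  proof (rule that[OF \<open>open W\<close> \<open>c \<in> W\<close> \<open>Z c = stack a0 b0\<close> \<open>continuous_on W Z\<close>])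
    show "stationary l1 K y x (stack_alpha (Z x)) (Z x $ None)" if "x \<in> W" for x
      using zero[OF that] by (simp add: kkt_residual_eq_0_iff)
    show "(Z has_derivative (*v) (solution_jacobian l1 l2 K y x (Z x))) (at x)" if "x \<in> W" for x
      using der[OF that] by (simp add: Z'[OF that])
    show "continuous_on W (\<lambda>x. solution_jacobian l1 l2 K y x (Z x))"
      using invertible
        by (intro continuous_on_solution_jacobian[OF \<open>continuous_on W Z\<close>]) (simp add: M_def)
  qed
qed

lemma solution_branch:
  assumes stat: "stationary l1 K y c a0 b0"
    and inv: "invertible (kkt_matrix K (loss_curvatures l2 c (margin K y a0 b0)))"
    and v: "loss_curvatures l2 c (margin K y a0 b0) \<noteq> 0"
  obtains U A B DA DB where "open U" "c \<in> U" "A c = a0" "B c = b0"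
    "\<forall>c'\<in>U. (\<forall>i. c'$i \<ge> 0) \<longrightarrow> (\<forall>a b. is_solution l K y c' a b \<longleftrightarrow> a = A c' \<and> b = B c')"
    "\<forall>c'\<in>U. (A has_derivative blinfun_apply (DA c')) (at c') \<and>
             (B has_derivative blinfun_apply (DB c')) (at c')"
    "continuous_on U DA" "continuous_on U DB"
    "stacked_jacobian (blinfun_apply (DA c)) (blinfun_apply (DB c))
       = solution_jacobian l1 l2 K y c (stack a0 b0)"
proof -
  obtain W Z where "open W" "c \<in> W" "Z c = stack a0 b0" "continuous_on W Z"
    and stat_Z: "\<And>x. x \<in> W \<Longrightarrow> stationary l1 K y x (stack_alpha (Z x)) (Z x $ None)"
    and der_Z: "\<And>x. x \<in> W \<Longrightarrow> (Z has_derivative (*v) (solution_jacobian l1 l2 K y x (Z x))) (at x)"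
    and cont_J: "continuous_on W (\<lambda>x. solution_jacobian l1 l2 K y x (Z x))"
    using stationary_branch[OF stat inv] by blast
  define J where "J x = solution_jacobian l1 l2 K y x (Z x)" for x
  define DA where "DA x = Blinfun (\<lambda>h. stack_alpha (J x *v h))" for x
  define DB where "DB x = Blinfun (\<lambda>h. (J x *v h) $ None)" for x
  have DA_apply: "blinfun_apply (DA x) = (\<lambda>h. stack_alpha (J x *v h))" for x
    unfolding DA_def
    by (intro bounded_linear_Blinfun_apply bounded_linear_compose[OF bounded_linear_stack_alpha
          matrix_vector_mul_bounded_linear])
  have DB_apply: "blinfun_apply (DB x) = (\<lambda>h. (J x *v h) $ None)" for x
    unfolding DB_def
    by (intro bounded_linear_Blinfun_apply bounded_linear_compose[OF bounded_linear_vec_nth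
          matrix_vector_mul_bounded_linear])
  define curvature where "curvature x = loss_curvatures l2 x (stacked_margin K y (Z x))" for x
  define U where "U = W \<inter> curvature -` (- {0})"
  have "continuous_on W curvature"
    unfolding curvature_def
    by (intro continuous_on_loss_curvatures continuous_on_stacked_margin continuous_on_id
        \<open>continuous_on W Z\<close>)
  then have "open U"
    unfolding U_def using \<open>open W\<close> by (intro continuous_open_preimage) auto
  have cont_J_U: "continuous_on U J"
    using cont_J unfolding J_def[abs_def] by (rule continuous_on_subset) (simp add: U_def)
  show thesis
  proof (rule that[of U "\<lambda>x. stack_alpha (Z x)" "\<lambda>x. Z x $ None" DA DB])
    show "open U" by fact
    show "c \<in> U" "stack_alpha (Z c) = a0" "Z c $ None = b0"
      using \<open>c \<in> W\<close> \<open>Z c = stack a0 b0\<close> v by (simp_all add: U_def curvature_def)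
    show "\<forall>c'\<in>U. (\<forall>i. c'$i \<ge> 0) \<longrightarrow>
        (\<forall>a b. is_solution l K y c' a b \<longleftrightarrow> a = stack_alpha (Z c') \<and> b = Z c' $ None)"
      using solution_iff_stationary_point stat_Z
        by (auto simp: U_def curvature_def stacked_margin_def)
    show "\<forall>c'\<in>U. ((\<lambda>x. stack_alpha (Z x)) has_derivative blinfun_apply (DA c')) (at c') \<and>
        ((\<lambda>x. Z x $ None) has_derivative blinfun_apply (DB c')) (at c')"
      using bounded_linear.has_derivative[OF bounded_linear_stack_alpha der_Z]
           has_derivative_vec_nth[OF der_Z]
      by (auto simp: U_def DA_apply DB_apply J_def)
    show "continuous_on U DA" "continuous_on U DB"
      unfolding DA_def DB_def
      by (intro continuous_on_blinfun_matrix_image cont_J_U bounded_linear_stack_alpha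
          bounded_linear_vec_nth)+
    show "stacked_jacobian (blinfun_apply (DA c)) (blinfun_apply (DB c))
        = solution_jacobian l1 l2 K y c (stack a0 b0)"
      by (simp add: DA_apply DB_apply stacked_jacobian_of_matrix J_def \<open>Z c = stack a0 b0\<close>)
  qed
qed

end

theorem theorem5:
  fixes K :: "real^'n^'n" and y c alpha0 :: "real^'n" and b0 :: real
    and l l1 l2 :: "real \<Rightarrow> real"
  assumes y: "\<forall>i. y$i = 1 \<or> y$i = -1"
    and sym: "transpose K = K"
    and pd: "\<forall>x. x \<noteq> 0 \<longrightarrow> x \<bullet> (K *v x) > 0"
    and cvx: "convex_on UNIV l"
    and d1: "\<forall>x. (l has_real_derivative l1 x) (at x)"
    and d2: "\<forall>x. (l1 has_real_derivative l2 x) (at x)"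
    and cont2: "continuous_on UNIV l2"
    and c_nonneg: "\<forall>i. c$i \<ge> 0"
    and sol: "is_solution l K y c alpha0 b0"
    and v_nz: "(\<chi> i. c$i * l2 (margin K y alpha0 b0 $ i)) \<noteq> 0"
  shows "(\<forall>a b. is_solution l K y c a b \<longrightarrow> a = alpha0 \<and> b = b0) \<and>
    (\<exists>U A B DA DB. open U \<and> c \<in> U \<and> A c = alpha0 \<and> B c = b0 \<and>
       (\<forall>c'\<in>U. (\<forall>i. c'$i \<ge> 0) \<longrightarrow>
           (\<forall>a b. is_solution l K y c' a b \<longleftrightarrow> a = A c' \<and> b = B c')) \<and>
       (\<forall>c'\<in>U. (A has_derivative blinfun_apply (DA c')) (at c') \<and>
                 (B has_derivative blinfun_apply (DB c')) (at c')) \<and>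
       continuous_on U DA \<and> continuous_on U DB \<and>
       (let u = (\<chi> i. y$i * l1 (margin K y alpha0 b0 $ i));
            v = (\<chi> i. c$i * l2 (margin K y alpha0 b0 $ i));
            M = kkt_matrix K v
        in invertible M \<and>
           stacked_jacobian (blinfun_apply (DA c)) (blinfun_apply (DB c))
             = - (matrix_inv M ** rhs_matrix u)))"
proof -
  interpret kernel_svm K y l l1 l2
    using assms by unfold_locales auto
  have stat: "stationary l1 K y c alpha0 b0"
    by (rule solution_imp_stationary[OF sol])
  have v: "loss_curvatures l2 c (margin K y alpha0 b0) \<noteq> 0"
    using v_nz by (simp add: loss_curvatures_def)
  have inv: "invertible (kkt_matrix K (loss_curvatures l2 c (margin K y alpha0 b0)))"
    using c_nonneg convex_second_deriv_nonneg[OF loss_convex loss_deriv loss_deriv2] v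
    by (intro invertible_kkt_matrix K_pos_def) (auto simp: loss_curvatures_def)
  have unique: "\<forall>a b. is_solution l K y c a b \<longrightarrow> a = alpha0 \<and> b = b0"
    using solution_unique[OF c_nonneg stat v] by blast
  show ?thesis
    by (rule solution_branch[OF stat inv v])
      (use unique inv in \<open>unfold Let_def solution_jacobian_def stacked_margin_stack loss_slopes_def
        loss_curvatures_def, blast\<close>)
qed

end
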